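(* Let $P\subset\mathbb{R}^d$ be a finite point set satisfying the standing condition, let $\varepsilon\in(0,1)$, and let $Q_\varepsilon$ be the set returned by the algorithm H-GRMR described in the context on input $P$, its extreme point set $X$, its inner-product Delaunay graph $\mathcal{G}(P)$, and $\varepsilon$. Then $Q_\varepsilon$ is an $\varepsilon$-regret set of $P$, i.e., $l(Q_\varepsilon)\le\varepsilon$.
   Context: For finite $Q\subset\mathbb{R}^d$ and unit $x$, $\omega(x,Q)=\max_{p\in Q}\langle p,x\rangle$. Standing condition: $\omega(x,P)>0$ for all $x\in\mathbb{S}^{d-1}$. Regret ratio $l_x(Q)=1-\omega(x,Q)/\omega(x,P)$; $l(Q)=\max_{x\in\mathbb{S}^{d-1}}l_x(Q)$; $Q\subseteq P$ is an $\varepsilon$-regret set if $l(Q)\le\varepsilon$. Voronoi cell $R(p)=\{x\ne0:\langle p,x\rangle\ge\omega(x,P)\}$; extreme points $X=\{t_1,\dots,t_m\}$ are the points with $R(p)\ne\varnothing$. The inner-product Delaunay graph $\mathcal{G}(P)$ is the undirected graph on $X$ with an edge $\{t_i,t_j\}$ iff $R(t_i)\cap R(t_j)\ne\varnothing$; $N(t)$ denotes the neighbors of $t$. For $t_i,t_j\in X$, $\varepsilon_{ij}$ is the optimal value of the linear program: maximize $1-\langle t_i,x\rangle$ over $x\in\mathbb{R}^d$ subject to $\langle t_j-t,x\rangle\ge0$ for all $t\in N(t_j)$ and $\langle t_j,x\rangle=1$ (with $\varepsilon_{ij}=+\infty$ if unbounded). Algorithm H-GRMR: Step 1: start with a directed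 graph $H_\varepsilon$ on $X$ with no edges; for each $t_i$, mark $t_i$ visited, enqueue all of $N(t_i)$, and while the queue is nonempty dequeue $t_j$; if $t_j$ is not visited, mark it visited, compute $\varepsilon_{ij}$, and if $\varepsilon_{ij}\le\varepsilon$ add edge $t_i\to t_j$ to $H_\varepsilon$ and enqueue all of $N(t_j)$ (visited marks are reset for each $t_i$). Step 2: let $Dom(t_i)=\{t_i\}\cup\{t_j: t_i\to t_j \text{ in } H_\varepsilon\}$; set $Q_\varepsilon=\varnothing$, $U=X$; while $U\ne\varnothing$, pick $t^*\in X\setminus Q_\varepsilon$ maximizing $|Dom(t^* )\cap U|$, add $t^*$ to $Q_\varepsilon$ and remove $Dom(t^* )$ from $U$. Return $Q_\varepsilon$. *)

theory Defs
  imports "HOL-Analysis.Analysis"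
begin

definition omega :: "'a::euclidean_space \<Rightarrow> 'a set \<Rightarrow> real" where
  "omega x Q = Max ((\<lambda>p. p \<bullet> x) ` Q)"

definition regret_ratio :: "'a::euclidean_space set \<Rightarrow> 'a \<Rightarrow> 'a set \<Rightarrow> real" where
  "regret_ratio P x Q = 1 - omega x Q / omega x P"

definition regret :: "'a::euclidean_space set \<Rightarrow> 'a set \<Rightarrow> real" where
  "regret P Q = (SUP x\<in>sphere 0 1. regret_ratio P x Q)"

definition eps_regret_set :: "'a::euclidean_space set \<Rightarrow> 'a set \<Rightarrow> real \<Rightarrow> bool" where
  "eps_regret_set P Q \<epsilon> \<longleftrightarrow> Q \<subseteq> P \<and> regret P Q \<le> \<epsilon>"

definition standing_condition :: "'a::euclidean_space set \<Rightarrow> bool" where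
  "standing_condition P \<longleftrightarrow> (\<forall>x. norm x = 1 \<longrightarrow> omega x P > 0)"

definition voronoi_cell :: "'a::euclidean_space set \<Rightarrow> 'a \<Rightarrow> 'a set" where
  "voronoi_cell P p = {x. x \<noteq> 0 \<and> p \<bullet> x \<ge> omega x P}"

definition extreme_points :: "'a::euclidean_space set \<Rightarrow> 'a set" where
  "extreme_points P = {p \<in> P. voronoi_cell P p \<noteq> {}}"

definition delaunay_nbrs :: "'a::euclidean_space set \<Rightarrow> 'a \<Rightarrow> 'a set" where
  "delaunay_nbrs P t = {t' \<in> extreme_points P. t' \<noteq> t \<and>
      voronoi_cell P t \<inter> voronoi_cell P t' \<noteq> {}}"

text \<open>eps_ij: optimal value of the LP (supremum in the extended reals; +infinity if unbounded).\<close>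
definition eps_lp :: "'a::euclidean_space set \<Rightarrow> 'a \<Rightarrow> 'a \<Rightarrow> ereal" where
  "eps_lp P ti tj = (SUP x\<in>{x. (\<forall>t\<in>delaunay_nbrs P tj. (tj - t) \<bullet> x \<ge> 0) \<and> tj \<bullet> x = 1}.
                        ereal (1 - ti \<bullet> x))"

text \<open>Step 1, BFS from t_i. State: (visited, queue, out-neighbours of t_i in H_eps).
  "Enqueue all of N(t)" appends the elements of N(t) in an arbitrary order.\<close>
inductive bfs_step :: "'a::euclidean_space set \<Rightarrow> real \<Rightarrow> 'a \<Rightarrow>
    'a set \<times> 'a list \<times> 'a set \<Rightarrow> 'a set \<times> 'a list \<times> 'a set \<Rightarrow> bool"
  for P \<epsilon> ti where
  visited: "tj \<in> vis \<Longrightarrow> bfs_step P \<epsilon> ti (vis, tj # q, E) (vis, q, E)"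
| add: "tj \<notin> vis \<Longrightarrow> eps_lp P ti tj \<le> ereal \<epsilon> \<Longrightarrow>
        set L = delaunay_nbrs P tj \<Longrightarrow> distinct L \<Longrightarrow>
        bfs_step P \<epsilon> ti (vis, tj # q, E) (insert tj vis, q @ L, insert tj E)"
| skip: "tj \<notin> vis \<Longrightarrow> \<not> eps_lp P ti tj \<le> ereal \<epsilon> \<Longrightarrow>
        bfs_step P \<epsilon> ti (vis, tj # q, E) (insert tj vis, q, E)"

text \<open>D is a possible value of Dom(t_i) = {t_i} \<union> {t_j. t_i \<rightarrow> t_j in H_eps}.\<close>
definition hgrmr_dom :: "'a::euclidean_space set \<Rightarrow> real \<Rightarrow> 'a \<Rightarrow> 'a set \<Rightarrow> bool" where
  "hgrmr_dom P \<epsilon> ti D \<longleftrightarrow>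
     (\<exists>L0 vis E. set L0 = delaunay_nbrs P ti \<and> distinct L0 \<and>
        (bfs_step P \<epsilon> ti)\<^sup>*\<^sup>* ({ti}, L0, {}) (vis, [], E) \<and> D = insert ti E)"

text \<open>Step 2, greedy. State: (Q_eps, U).\<close>
inductive greedy_step :: "'a::euclidean_space set \<Rightarrow> ('a \<Rightarrow> 'a set) \<Rightarrow>
    'a set \<times> 'a set \<Rightarrow> 'a set \<times> 'a set \<Rightarrow> bool"
  for P Dom where
  pick: "U \<noteq> {} \<Longrightarrow> t \<in> extreme_points P - Q \<Longrightarrow>
         (\<forall>t'\<in>extreme_points P - Q. card (Dom t' \<inter> U) \<le> card (Dom t \<inter> U)) \<Longrightarrow>
         greedy_step P Dom (Q, U) (insert t Q, U - Dom t)"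

definition hgrmr_output :: "'a::euclidean_space set \<Rightarrow> real \<Rightarrow> 'a set \<Rightarrow> bool" where
  "hgrmr_output P \<epsilon> Q \<longleftrightarrow>
     (\<exists>Dom. (\<forall>t\<in>extreme_points P. hgrmr_dom P \<epsilon> t (Dom t)) \<and>
        (greedy_step P Dom)\<^sup>*\<^sup>* ({}, extreme_points P) (Q, {}))"

end

theory Submission
  imports Defs
begin

text \<open>Fix a unit direction x and a point t of P maximising the score in direction x; t is
  an extreme point, so the greedy phase puts into Q some q with t \<in> Dom(q). Either q = t, or
  the search from q accepted t, i.e. eps_qt \<le> eps. In the second case the rescaled direction
  y = x / omega(x,P) satisfies t \<bullet> y = 1 and (t - t') \<bullet> y \<ge> 0 for every t' \<in> P, in particular
  for the Delaunay neighbours of t, so y is feasible for the LP defining eps_qt. Hence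
  1 - q \<bullet> y \<le> eps, i.e. omega(x,Q) \<ge> q \<bullet> x \<ge> (1 - eps) omega(x,P).
  Only eps \<ge> 0 is needed (for the case q = t).\<close>

lemma inner_le_omega:
  assumes "finite Q" "q \<in> Q"
  shows "q \<bullet> x \<le> omega x Q"
  unfolding omega_def using assms by (intro Max_ge) auto

lemma omega_attained:
  assumes "finite P" "P \<noteq> {}"
  obtains t where "t \<in> P" "t \<bullet> x = omega x P"
proof -
  have "omega x P \<in> (\<lambda>p. p \<bullet> x) ` P"
    unfolding omega_def using assms by (intro Max_in) auto
  then show ?thesis using that by auto
qed

lemma maximizer_in_extreme_points:
  assumes "t \<in> P" "x \<noteq> 0" "t \<bullet> x = omega x P"
  shows "t \<in> extreme_points P"
  using assms unfolding extreme_points_def voronoi_cell_def by auto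

lemma extreme_points_subset: "extreme_points P \<subseteq> P"
  unfolding extreme_points_def by auto

lemma delaunay_nbrs_subset: "delaunay_nbrs P t \<subseteq> P"
  unfolding delaunay_nbrs_def extreme_points_def by auto

lemma eps_lp_ge_feasible:
  assumes "\<forall>t'\<in>delaunay_nbrs P t. (t - t') \<bullet> y \<ge> 0" "t \<bullet> y = 1"
  shows "ereal (1 - q \<bullet> y) \<le> eps_lp P q t"
  unfolding eps_lp_def by (rule SUP_upper) (use assms in auto)

lemma eps_lp_le_imp_inner_ge:
  assumes "finite P" "t \<in> P" "t \<bullet> x = omega x P" "omega x P > 0"
    and "eps_lp P q t \<le> ereal \<epsilon>"
  shows "(1 - \<epsilon>) * omega x P \<le> q \<bullet> x"
proof -
  define c where "c = omega x P"
  define y where "y = x /\<^sub>R c"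
  have "c > 0" using assms(4) by (simp add: c_def)
  have "(t - t') \<bullet> y \<ge> 0" if "t' \<in> delaunay_nbrs P t" for t'
  proof -
    have "t' \<in> P" using delaunay_nbrs_subset that by blast
    then have "t' \<bullet> x \<le> t \<bullet> x" using inner_le_omega[OF assms(1)] assms(3) by metis
    then show ?thesis using \<open>c > 0\<close> by (simp add: y_def inner_diff_left)
  qed
  moreover have "t \<bullet> y = 1" using assms(3) \<open>c > 0\<close> by (simp add: y_def c_def)
  ultimately have "ereal (1 - q \<bullet> y) \<le> eps_lp P q t" by (intro eps_lp_ge_feasible) auto
  also have "\<dots> \<le> ereal \<epsilon>" by (fact assms(5))
  finally have "1 - q \<bullet> y \<le> \<epsilon>" by simp
  then have "1 - (q \<bullet> x) / c \<le> \<epsilon>" by (simp add: y_def divide_inverse mult.commute)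
  then show ?thesis using \<open>c > 0\<close> by (simp add: c_def field_simps)
qed

lemma bfs_step_rtranclp_eps_lp:
  assumes "(bfs_step P \<epsilon> ti)\<^sup>*\<^sup>* (vis, q, E) (vis', q', E')"
    and "\<forall>tj\<in>E. eps_lp P ti tj \<le> ereal \<epsilon>"
  shows "\<forall>tj\<in>E'. eps_lp P ti tj \<le> ereal \<epsilon>"
  using assms
proof (induction rule: rtranclp_induct[of _ "(ax, ay, az)" "(bx, by, bz)", split_rule,
      consumes 1, case_names refl step])
  case (step vis' q' E' vis'' q'' E'')
  from step.hyps(2) step.IH step.prems show ?case
    by (cases rule: bfs_step.cases) auto
qed simp

lemma hgrmr_dom_eps_lp:
  assumes "hgrmr_dom P \<epsilon> ti D" "tj \<in> D" "tj \<noteq> ti"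
  shows "eps_lp P ti tj \<le> ereal \<epsilon>"
proof -
  obtain L0 vis E where run: "(bfs_step P \<epsilon> ti)\<^sup>*\<^sup>* ({ti}, L0, {}) (vis, [], E)"
    and "D = insert ti E"
    using assms(1) unfolding hgrmr_dom_def by blast
  moreover have "\<forall>tj\<in>E. eps_lp P ti tj \<le> ereal \<epsilon>"
    using bfs_step_rtranclp_eps_lp[OF run] by simp
  ultimately show ?thesis using assms(2,3) by auto
qed

lemma greedy_step_rtranclp_covers:
  assumes "(greedy_step P Dom)\<^sup>*\<^sup>* (Q, U) (Q', U')"
    and "Q \<subseteq> extreme_points P" "extreme_points P - U \<subseteq> (\<Union>q\<in>Q. Dom q)"
  shows "Q' \<subseteq> extreme_points P \<and> extreme_points P - U' \<subseteq> (\<Union>q\<in>Q'. Dom q)"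
  using assms
proof (induction rule: rtranclp_induct2)
  case (step Q' U' Q'' U'')
  from step.hyps(2) step.IH step.prems show ?case
    by (cases rule: greedy_step.cases) auto
qed simp

lemma hgrmr_output_dominates:
  assumes "hgrmr_output P \<epsilon> Q"
  shows "Q \<subseteq> extreme_points P"
    and "t \<in> extreme_points P \<Longrightarrow> \<exists>q\<in>Q. t = q \<or> eps_lp P q t \<le> ereal \<epsilon>"
proof -
  obtain Dom where Dom: "\<And>t. t \<in> extreme_points P \<Longrightarrow> hgrmr_dom P \<epsilon> t (Dom t)"
    and greedy: "(greedy_step P Dom)\<^sup>*\<^sup>* ({}, extreme_points P) (Q, {})"
    using assms unfolding hgrmr_output_def by blast
  have QX: "Q \<subseteq> extreme_points P" and cover: "extreme_points P \<subseteq> (\<Union>q\<in>Q. Dom q)"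
    using greedy_step_rtranclp_covers[OF greedy] by auto
  show "Q \<subseteq> extreme_points P" by (fact QX)
  assume "t \<in> extreme_points P"
  then obtain q where "q \<in> Q" "t \<in> Dom q" using cover by blast
  moreover have "hgrmr_dom P \<epsilon> q (Dom q)" using Dom QX \<open>q \<in> Q\<close> by blast
  ultimately show "\<exists>q\<in>Q. t = q \<or> eps_lp P q t \<le> ereal \<epsilon>"
    using hgrmr_dom_eps_lp by blast
qed

lemma regret_ratio_le:
  assumes "omega x P > 0" "(1 - \<epsilon>) * omega x P \<le> omega x Q"
  shows "regret_ratio P x Q \<le> \<epsilon>"
proof -
  have "1 - \<epsilon> \<le> omega x Q / omega x P" using assms by (simp add: field_simps)
  then show ?thesis unfolding regret_ratio_def by linarith
qed

lemma regret_le: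
  fixes P Q :: "'a::euclidean_space set"
  assumes "\<And>x. x \<in> sphere 0 1 \<Longrightarrow> regret_ratio P x Q \<le> \<epsilon>"
  shows "regret P Q \<le> \<epsilon>"
  unfolding regret_def using assms by (intro cSUP_least) auto

theorem theorem4:
  fixes P :: "'a::euclidean_space set" and \<epsilon> :: real and Q :: "'a set"
  assumes "finite P" and "P \<noteq> {}" and "standing_condition P"
    and "0 < \<epsilon>" and "\<epsilon> < 1"
    and "hgrmr_output P \<epsilon> Q"
  shows "eps_regret_set P Q \<epsilon>"
proof -
  have "Q \<subseteq> P"
    using hgrmr_output_dominates(1)[OF assms(6)] extreme_points_subset by blast
  then have "finite Q" using assms(1) finite_subset by blast
  have "regret_ratio P x Q \<le> \<epsilon>" if "x \<in> sphere 0 1" for x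
  proof -
    have "x \<noteq> 0" "omega x P > 0"
      using that assms(3) unfolding standing_condition_def by auto
    obtain t where t: "t \<in> P" "t \<bullet> x = omega x P" using omega_attained assms(1,2) by blast
    then have "t \<in> extreme_points P" using maximizer_in_extreme_points \<open>x \<noteq> 0\<close> by blast
    then obtain q where "q \<in> Q" "t = q \<or> eps_lp P q t \<le> ereal \<epsilon>"
      using hgrmr_output_dominates(2)[OF assms(6)] by blast
    then have "(1 - \<epsilon>) * omega x P \<le> q \<bullet> x"
      using t eps_lp_le_imp_inner_ge[OF assms(1)] \<open>omega x P > 0\<close> assms(4)
      by (auto simp: algebra_simps)
    also have "\<dots> \<le> omega x Q" using inner_le_omega \<open>finite Q\<close> \<open>q \<in> Q\<close> by blast
    finally show ?thesis using regret_ratio_le \<open>omega x P > 0\<close> by blast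
  qed
  then show ?thesis
    unfolding eps_regret_set_def using regret_le \<open>Q \<subseteq> P\<close> by blast
qed

end
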